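(* If $\lambda$ is the partition associated with a gap sequence $\{w_1,\dots,w_g\}$, then $s_\lambda(t)$ does not depend on $t_i$ for every positive integer $i\notin\{w_1,\dots,w_g\}$.
   Context: For $t=(t_1,t_2,\dots)$ define $p_m(t)$ by $\exp(\sum_{m\ge1}t_mk^m)=\sum_{m\ge0}p_m(t)k^m$, $p_m=0$ for $m<0$; $s_\mu(t)=\det(p_{\mu_i-i+j}(t))_{1\le i,j\le l}$ for a partition $\mu=(\mu_1\ge\dots\ge\mu_l)$. A gap sequence of genus $g\ge1$ is a set $G=\{w_1<\dots<w_g\}\subset\mathbb Z_{\ge0}$ with $g$ elements whose complement in $\mathbb Z_{\ge0}$ contains $0$ and is closed under addition; its partition is $\lambda=(w_g,\dots,w_1)-(g-1,\dots,1,0)$. *)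

theory Defs
  imports "HOL-Computational_Algebra.Formal_Power_Series" "Jordan_Normal_Form.Determinant"
begin

definition tseries :: "(nat \<Rightarrow> 'a::field_char_0) \<Rightarrow> 'a fps" where
  "tseries t = Abs_fps (\<lambda>m. if m = 0 then 0 else t m)"

definition schur_p :: "int \<Rightarrow> (nat \<Rightarrow> 'a::field_char_0) \<Rightarrow> 'a" where
  "schur_p m t = (if m < 0 then 0 else fps_nth (fps_exp 1 oo tseries t) (nat m))"

text \<open>Schur function of a partition mu = [mu_1, ..., mu_l] (0-indexed list):
  det (p_{mu_i - i + j}) for 1 <= i,j <= l.\<close>
definition schur_s :: "nat list \<Rightarrow> (nat \<Rightarrow> 'a::field_char_0) \<Rightarrow> 'a" where
  "schur_s mu t = det (mat (length mu) (length mu)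
      (\<lambda>(i, j). schur_p (int (mu ! i) - int i + int j) t))"

definition gap_sequence :: "nat set \<Rightarrow> bool" where
  "gap_sequence G \<longleftrightarrow> finite G \<and> card G \<ge> 1 \<and> 0 \<notin> G \<and>
     (\<forall>a b. a \<notin> G \<longrightarrow> b \<notin> G \<longrightarrow> a + b \<notin> G)"

text \<open>Partition (w_g, ..., w_1) - (g-1, ..., 1, 0), as the list [lambda_1, ..., lambda_g].\<close>
definition gap_partition :: "nat set \<Rightarrow> nat list" where
  "gap_partition G = rev (map (\<lambda>k. sorted_list_of_set G ! k - k) [0..<card G])"

end

theory Submission
  imports Defs
begin

text \<open>Replacing t_i by c multiplies the generating series exp(\<Sum> t_m k^m) of the p_m by
  Q = exp((c - t_i) k^i), so p_m(t') = \<Sum>_n Q_n p_{m-n}(t), where Q_n = 0 unless i divides n.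
  Index the rows of the Jacobi-Trudi matrix of the gap partition by the gaps w_g > ... > w_1; the
  row of w is (p_{w+l+1-g}(t))_l. If i is not a gap then no multiple of i is, and as non-gaps are
  closed under addition, w - y is not a multiple of i for a gap w and a non-gap y \<le> w. Hence the
  row of w at t' is the sum over the gaps y \<le> w of Q_{w-y} times the row of y at t: the two
  matrices differ by a unitriangular factor.\<close>

definition fps_Exp :: "'a::field_char_0 fps \<Rightarrow> 'a fps" where
  "fps_Exp a = fps_exp 1 oo a"

lemma fps_Exp_nth_0 [simp]: "fps_nth (fps_Exp a) 0 = 1"
  by (simp add: fps_Exp_def)

lemma fps_Exp_deriv:
  "fps_nth a 0 = 0 \<Longrightarrow> fps_deriv (fps_Exp a) = fps_Exp a * fps_deriv a"
  by (simp add: fps_Exp_def fps_compose_deriv)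

lemma fps_Exp_mult_Exp_neg:
  assumes "fps_nth a 0 = 0"
  shows "fps_Exp a * fps_Exp (- a) = 1"
proof -
  have "fps_deriv (fps_Exp a * fps_Exp (- a)) = 0"
    using assms by (simp add: fps_Exp_deriv algebra_simps)
  then show ?thesis unfolding fps_deriv_eq_0_iff by simp
qed

lemma fps_Exp_add:
  assumes "fps_nth a 0 = 0" and "fps_nth b 0 = 0"
  shows "fps_Exp (a + b) = fps_Exp a * fps_Exp b"
proof -
  have "fps_deriv (fps_Exp (a + b) * fps_Exp (- a) * fps_Exp (- b)) = 0"
    using assms by (simp add: fps_Exp_deriv algebra_simps)
  then have const: "fps_Exp (a + b) * fps_Exp (- a) * fps_Exp (- b) = 1"
    unfolding fps_deriv_eq_0_iff by simp
  have "fps_Exp (a + b) =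
      fps_Exp (a + b) * (fps_Exp a * fps_Exp (- a)) * (fps_Exp b * fps_Exp (- b))"
    using assms by (simp add: fps_Exp_mult_Exp_neg)
  also have "\<dots> = fps_Exp (a + b) * fps_Exp (- a) * fps_Exp (- b) * fps_Exp a * fps_Exp b"
    by (simp add: algebra_simps)
  finally show ?thesis using const by simp
qed

definition exp_monomial :: "'a::field_char_0 \<Rightarrow> nat \<Rightarrow> 'a fps" where
  "exp_monomial d i = fps_Exp (fps_const d * fps_X ^ i)"

lemma exp_monomial_nth_not_dvd:
  assumes "\<not> i dvd n"
  shows "fps_nth (exp_monomial d i) n = 0"
proof -
  have "fps_nth ((fps_const d * fps_X ^ i) ^ k) n = 0" for k
  proof -
    have "(fps_const d * fps_X ^ i) ^ k = fps_const (d ^ k) * fps_X ^ (i * k)"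
      by (simp add: power_mult_distrib power_mult)
    then show ?thesis using assms by (auto simp: fps_X_power_iff)
  qed
  then show ?thesis by (simp add: exp_monomial_def fps_Exp_def fps_compose_nth)
qed

lemma gap_sequence_nongap_mult:
  assumes "gap_sequence G" and "i \<notin> G"
  shows "i * r \<notin> G"
proof (induction r)
  case 0
  then show ?case using assms(1) by (simp add: gap_sequence_def)
next
  case (Suc r)
  then have "i + i * r \<notin> G" using assms by (simp add: gap_sequence_def)
  then show ?case by simp
qed

lemma gap_sequence_gap_minus_nongap:
  assumes "gap_sequence G" and "i \<notin> G" and "x \<in> G" and "y \<notin> G" and "y \<le> x"
  shows "\<not> i dvd x - y"
proof
  assume "i dvd x - y"
  then obtain r where r: "x - y = i * r" by auto
  have "y + i * r \<notin> G"
    using assms(1,4) gap_sequence_nongap_mult[OF assms(1,2)] by (simp add: gap_sequence_def)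
  moreover have "y + i * r = x" using r assms(5) by simp
  ultimately show False using assms(3) by simp
qed

definition gaps_desc :: "nat set \<Rightarrow> nat list" where
  "gaps_desc G = rev (sorted_list_of_set G)"

lemma length_gaps_desc [simp]: "length (gaps_desc G) = card G"
  by (simp add: gaps_desc_def)

lemma gaps_desc_strict_decreasing:
  assumes "j < k" and "k < card G"
  shows "gaps_desc G ! k < gaps_desc G ! j"
proof -
  have "sorted_wrt (\<lambda>x y. y < x) (gaps_desc G)"
    by (simp add: gaps_desc_def sorted_wrt_rev)
  from sorted_wrt_nth_less[OF this assms(1)] assms(2) show ?thesis by simp
qed

lemma gaps_desc_mem:
  assumes "finite G" and "j < card G"
  shows "gaps_desc G ! j \<in> G"
  using assms nth_mem[of j "gaps_desc G"] by (simp add: gaps_desc_def)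

lemma sum_gaps_desc:
  assumes "finite G"
  shows "(\<Sum>k<card G. f (gaps_desc G ! k)) = sum f G"
proof -
  have "sum f G = sum f (set (gaps_desc G))"
    using assms by (simp add: gaps_desc_def)
  also have "\<dots> = sum_list (map f (gaps_desc G))"
    by (rule sum.distinct_set_conv_list) (simp add: gaps_desc_def)
  also have "\<dots> = (\<Sum>k<card G. f (gaps_desc G ! k))"
    by (simp add: sum_list_sum_nth lessThan_atLeast0)
  finally show ?thesis by simp
qed

lemma gap_partition_nth:
  assumes "j < card G"
  shows "int (gap_partition G ! j) = int (gaps_desc G ! j) - int (card G - 1 - j)"
proof -
  let ?ws = "sorted_list_of_set G"
  have "card G - 1 - j \<le> ?ws ! (card G - 1 - j)"
    using assms by (intro sorted_wrt_less_idx) auto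
  then show ?thesis
    using assms by (simp add: gap_partition_def gaps_desc_def rev_nth)
qed

lemma tseries_fun_upd:
  assumes "0 < i"
  shows "tseries (t(i := c)) = tseries t + fps_const (c - t i) * fps_X ^ i"
  using assms by (intro fps_ext) (auto simp: tseries_def fps_X_power_iff)

lemma schur_p_fun_upd:
  fixes t :: "nat \<Rightarrow> 'a::field_char_0"
  assumes "0 < i" and "m \<le> int N"
  shows "schur_p m (t(i := c)) =
    (\<Sum>n\<le>N. fps_nth (exp_monomial (c - t i) i) n * schur_p (m - int n) t)"
proof (cases "m < 0")
  case True
  then show ?thesis by (simp add: schur_p_def)
next
  case False
  let ?Q = "exp_monomial (c - t i) i" and ?E = "fps_Exp (tseries t)"
  have "fps_Exp (tseries (t(i := c))) = ?E * ?Q"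
    unfolding tseries_fun_upd[OF assms(1)] exp_monomial_def
    using assms(1) by (intro fps_Exp_add) (simp_all add: tseries_def)
  then have "schur_p m (t(i := c)) = fps_nth (?Q * ?E) (nat m)"
    using False by (simp add: schur_p_def fps_Exp_def mult.commute)
  also have "\<dots> = (\<Sum>n=0..nat m. fps_nth ?Q n * fps_nth ?E (nat m - n))"
    by (rule fps_mult_nth)
  also have "\<dots> = (\<Sum>n=0..nat m. fps_nth ?Q n * schur_p (m - int n) t)"
    using False by (intro sum.cong refl) (auto simp: schur_p_def fps_Exp_def nat_diff_distrib)
  also have "\<dots> = (\<Sum>n\<le>N. fps_nth ?Q n * schur_p (m - int n) t)"
    using assms(2) by (intro sum.mono_neutral_left) (auto simp: schur_p_def)
  finally show ?thesis .
qed

lemma schur_p_fun_upd_gaps: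
  fixes t :: "nat \<Rightarrow> 'a::field_char_0"
  assumes "gap_sequence G" and "0 < i" and "i \<notin> G" and "x \<in> G" and "m \<le> int x"
  shows "schur_p m (t(i := c)) = (\<Sum>y\<in>G.
    (if y \<le> x then fps_nth (exp_monomial (c - t i) i) (x - y) else 0)
      * schur_p (m - int x + int y) t)"
proof -
  let ?Q = "exp_monomial (c - t i) i"
  have "schur_p m (t(i := c)) = (\<Sum>n\<le>x. fps_nth ?Q n * schur_p (m - int n) t)"
    using assms(2,5) by (rule schur_p_fun_upd)
  also have "\<dots> = (\<Sum>y\<le>x. fps_nth ?Q (x - y) * schur_p (m - int x + int y) t)"
    unfolding atMost_atLeast0
    by (subst sum.atLeastAtMost_rev) (intro sum.cong refl, auto simp: of_nat_diff)
  also have "\<dots> =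
      (\<Sum>y\<in>G \<inter> {..x}. fps_nth ?Q (x - y) * schur_p (m - int x + int y) t)"
  proof (intro sum.mono_neutral_right)
    show "\<forall>y\<in>{..x} - G \<inter> {..x}.
        fps_nth ?Q (x - y) * schur_p (m - int x + int y) t = 0"
      using gap_sequence_gap_minus_nongap[OF assms(1,3,4)] exp_monomial_nth_not_dvd by auto
  qed auto
  also have "\<dots> = (\<Sum>y\<in>G. (if y \<le> x then fps_nth ?Q (x - y) else 0)
      * schur_p (m - int x + int y) t)"
    using assms(1) by (auto simp: gap_sequence_def sum.inter_restrict intro!: sum.cong)
  finally show ?thesis .
qed

definition gap_schur_matrix :: "nat set \<Rightarrow> (nat \<Rightarrow> 'a::field_char_0) \<Rightarrow> 'a mat"
  where
  "gap_schur_matrix G t = mat (card G) (card G)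
     (\<lambda>(j, l). schur_p (int (gaps_desc G ! j) + int l + 1 - int (card G)) t)"

lemma schur_s_gap_partition: "schur_s (gap_partition G) t = det (gap_schur_matrix G t)"
proof -
  have "length (gap_partition G) = card G"
    by (simp add: gap_partition_def)
  then show ?thesis
    unfolding schur_s_def gap_schur_matrix_def
    by (intro arg_cong[where f = det] eq_matI)
      (auto simp: gap_partition_nth of_nat_diff algebra_simps)
qed

definition gap_transfer_matrix :: "nat set \<Rightarrow> 'a::zero fps \<Rightarrow> 'a mat" where
  "gap_transfer_matrix G Q = mat (card G) (card G) (\<lambda>(j, k).
     if gaps_desc G ! k \<le> gaps_desc G ! j then fps_nth Q (gaps_desc G ! j - gaps_desc G ! k)
     else 0)"

lemma det_gap_transfer_matrix:
  "det (gap_transfer_matrix G Q) = fps_nth Q 0 ^ card G"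
proof -
  have "upper_triangular (gap_transfer_matrix G Q)"
    by (rule upper_triangularI)
      (auto simp: gap_transfer_matrix_def dest: gaps_desc_strict_decreasing)
  then have "det (gap_transfer_matrix G Q) = prod_list (diag_mat (gap_transfer_matrix G Q))"
    by (rule det_upper_triangular[where n = "card G"]) (simp add: gap_transfer_matrix_def)
  also have "diag_mat (gap_transfer_matrix G Q) = map (\<lambda>_. fps_nth Q 0) [0..<card G]"
    unfolding diag_mat_def by (intro map_cong) (auto simp: gap_transfer_matrix_def)
  finally show ?thesis by (simp add: map_replicate_const)
qed

lemma gap_schur_matrix_fun_upd:
  fixes t :: "nat \<Rightarrow> 'a::field_char_0"
  assumes "gap_sequence G" and "0 < i" and "i \<notin> G"
  shows "gap_schur_matrix G (t(i := c)) =
    gap_transfer_matrix G (exp_monomial (c - t i) i) * gap_schur_matrix G t"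
proof (rule eq_matI)
  fix j l
  assume "j < dim_row (gap_transfer_matrix G (exp_monomial (c - t i) i) * gap_schur_matrix G t)"
    and "l < dim_col (gap_transfer_matrix G (exp_monomial (c - t i) i) * gap_schur_matrix G t)"
  then have j: "j < card G" and l: "l < card G"
    by (simp_all add: gap_transfer_matrix_def gap_schur_matrix_def)
  let ?w = "gaps_desc G" and ?Q = "exp_monomial (c - t i) i" and ?e = "int l + 1 - int (card G)"
  have fin: "finite G" using assms(1) by (simp add: gap_sequence_def)
  have "(gap_transfer_matrix G ?Q * gap_schur_matrix G t) $$ (j, l) =
    (\<Sum>k<card G. (if ?w ! k \<le> ?w ! j then fps_nth ?Q (?w ! j - ?w ! k) else 0)
       * schur_p (int (?w ! k) + ?e) t)"
    using j l by (simp add: gap_transfer_matrix_def gap_schur_matrix_def scalar_prod_def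
        lessThan_atLeast0 algebra_simps)
  also have "\<dots> = (\<Sum>y\<in>G. (if y \<le> ?w ! j then fps_nth ?Q (?w ! j - y) else 0)
       * schur_p (int y + ?e) t)"
    using fin by (rule sum_gaps_desc)
  also have "\<dots> = schur_p (int (?w ! j) + ?e) (t(i := c))"
    using assms fin j l
    by (subst schur_p_fun_upd_gaps[where x = "?w ! j"]) (auto simp: gaps_desc_mem algebra_simps)
  also have "\<dots> = gap_schur_matrix G (t(i := c)) $$ (j, l)"
    using j l by (simp add: gap_schur_matrix_def algebra_simps)
  finally show "gap_schur_matrix G (t(i := c)) $$ (j, l) =
    (gap_transfer_matrix G ?Q * gap_schur_matrix G t) $$ (j, l)" ..
qed (simp_all add: gap_transfer_matrix_def gap_schur_matrix_def)

theorem proposition2p2: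
  fixes G :: "nat set" and t :: "nat \<Rightarrow> 'a::field_char_0" and i :: nat and c :: 'a
  assumes "gap_sequence G" and "i > 0" and "i \<notin> G"
  shows "schur_s (gap_partition G) (t(i := c)) = schur_s (gap_partition G) t"
proof -
  let ?T = "gap_transfer_matrix G (exp_monomial (c - t i) i)"
  have "schur_s (gap_partition G) (t(i := c)) = det (?T * gap_schur_matrix G t)"
    using assms by (simp add: schur_s_gap_partition gap_schur_matrix_fun_upd)
  also have "\<dots> = det ?T * det (gap_schur_matrix G t)"
    by (rule det_mult[where n = "card G"])
      (simp_all add: gap_transfer_matrix_def gap_schur_matrix_def)
  also have "\<dots> = schur_s (gap_partition G) t"
    by (simp add: det_gap_transfer_matrix exp_monomial_def schur_s_gap_partition)
  finally show ?thesis .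
qed

end
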